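(* Let $n\ge 4$ and let $D_1,\dots,D_{n-1}$ be positive numbers satisfying $D_kD_{l-j}\ge D_jD_{l-k}+D_lD_{k-j}$ for all integers $1\le j<k<l\le n-1$. Put $s_k=\sin(k\pi/n)$ and $a_k=\log(D_k/s_k)$. Then for all $1\le j<k<l\le n-1$, $$a_k+a_{l-j}\ \ge\ \frac{s_js_{l-k}}{s_ks_{l-j}}\,(a_j+a_{l-k})+\frac{s_ls_{k-j}}{s_ks_{l-j}}\,(a_l+a_{k-j}).$$ *)

theory Defs
  imports Complex_Main
begin

end

theory Submission
  imports Defs "HOL-Analysis.Convex"
begin

text \<open>
  Ptolemy's identity for sines, s(k) s(l-j) = s(j) s(l-k) + s(l) s(k-j), makes the two
  weights on the right-hand side sum to one, and a(k) + a(l-j) = ln (D(k) D(l-j) / (s(k) s(l-j))).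
  The inequality is therefore a two-term log-sum inequality (concavity of ln) applied to the
  hypothesis D(j) D(l-k) + D(l) D(k-j) \<le> D(k) D(l-j).
\<close>

lemma sin_ptolemy:
  fixes J K L :: real
  shows "sin K * sin (L - J) = sin J * sin (L - K) + sin L * sin (K - J)"
  by (simp add: sin_diff algebra_simps)

lemma sin_pi_fraction_pos:
  assumes "0 < k" "k < n"
  shows "sin (real k * pi / real n) > 0"
proof (rule sin_gt_zero)
  show "0 < real k * pi / real n" using assms by simp
  show "real k * pi / real n < pi" using assms by (simp add: field_simps)
qed

lemma log_sum_inequality:
  fixes A B X Y Z :: real
  assumes "A > 0" "B > 0" "Y > 0" "Z > 0" "Y + Z \<le> X"
  shows "A / (A + B) * ln (Y / A) + B / (A + B) * ln (Z / B) \<le> ln (X / (A + B))"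
proof -
  define t where "t = B / (A + B)"
  have weights: "0 \<le> t" "t \<le> 1" "1 - t = A / (A + B)"
    using assms by (auto simp: t_def field_simps)
  have "(1 - t) * (Y / A) = Y / (A + B)" "t * (Z / B) = Z / (A + B)"
    using assms unfolding weights(3) by (simp_all add: t_def)
  then have mean: "(1 - t) * (Y / A) + t * (Z / B) = (Y + Z) / (A + B)"
    by (simp add: add_divide_distrib)
  have "(1 - t) * ln (Y / A) + t * ln (Z / B) \<le> ln ((1 - t) * (Y / A) + t * (Z / B))"
    using concave_onD[OF ln_concave weights(1,2), of "Y / A" "Z / B"] assms by simp
  also have "\<dots> \<le> ln (X / (A + B))"
    unfolding mean using assms by (intro ln_mono divide_right_mono) auto
  finally show ?thesis
    unfolding t_def[symmetric] weights(3)[symmetric] .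
qed

theorem mainTheorem10:
  fixes n :: nat and D s a :: "nat \<Rightarrow> real"
  assumes n4: "n \<ge> 4"
    and Dpos: "\<And>k. 1 \<le> k \<Longrightarrow> k \<le> n - 1 \<Longrightarrow> D k > 0"
    and Dineq: "\<And>j k l. 1 \<le> j \<Longrightarrow> j < k \<Longrightarrow> k < l \<Longrightarrow> l \<le> n - 1 \<Longrightarrow>
                 D k * D (l - j) \<ge> D j * D (l - k) + D l * D (k - j)"
    and s_def: "\<And>k. s k = sin (real k * pi / real n)"
    and a_def: "\<And>k. a k = ln (D k / s k)"
  shows "\<forall>j k l. 1 \<le> j \<and> j < k \<and> k < l \<and> l \<le> n - 1 \<longrightarrow>
           a k + a (l - j) \<ge>
             (s j * s (l - k)) / (s k * s (l - j)) * (a j + a (l - k))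
           + (s l * s (k - j)) / (s k * s (l - j)) * (a l + a (k - j))"
proof (intro allI impI)
  fix j k l assume jkl: "1 \<le> j \<and> j < k \<and> k < l \<and> l \<le> n - 1"
  have s_pos: "s i > 0" and D_pos: "D i > 0" if "1 \<le> i" "i \<le> n - 1" for i
    using that n4 sin_pi_fraction_pos[of i n] Dpos[of i] by (auto simp: s_def)
  have a_add: "a i + a i' = ln (D i * D i' / (s i * s i'))"
    if "1 \<le> i" "i \<le> n - 1" "1 \<le> i'" "i' \<le> n - 1" for i i'
    using that s_pos[of i] s_pos[of i'] D_pos[of i] D_pos[of i']
    by (simp add: a_def ln_div ln_mult)
  have a_sums: "a k + a (l - j) = ln (D k * D (l - j) / (s k * s (l - j)))"
    "a j + a (l - k) = ln (D j * D (l - k) / (s j * s (l - k)))"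
    "a l + a (k - j) = ln (D l * D (k - j) / (s l * s (k - j)))"
    using jkl by (auto intro!: a_add)
  have ptolemy: "s k * s (l - j) = s j * s (l - k) + s l * s (k - j)"
    using jkl sin_ptolemy[of "real k * pi / n" "real l * pi / n" "real j * pi / n"]
    by (simp add: s_def of_nat_diff diff_divide_distrib left_diff_distrib)
  have "s j * s (l - k) > 0" "s l * s (k - j) > 0" "D j * D (l - k) > 0" "D l * D (k - j) > 0"
    using jkl by (auto intro!: mult_pos_pos s_pos D_pos)
  from log_sum_inequality[OF this Dineq[of j k l]] jkl
  show "a k + a (l - j) \<ge>
             (s j * s (l - k)) / (s k * s (l - j)) * (a j + a (l - k))
           + (s l * s (k - j)) / (s k * s (l - j)) * (a l + a (k - j))"
    by (simp only: a_sums ptolemy)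
qed

end
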